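(* Let $k>0$ and consider the system of ODEs, for $r>0$, $\theta$, $z$, $p_R$, $p_S$ real, \[ \dot r = p_R,\quad \dot\theta = \frac{p_S}{r^2},\quad \dot z = \frac{p_S}{2},\quad \dot p_R = \frac{p_S^2}{r^3} - \frac{2kr^3}{(r^4+16z^2)^{3/2}},\quad \dot p_S = -\frac{8kr^2 z}{(r^4+16z^2)^{3/2}}. \] Then the following functions, quadratic in the momenta, are first integrals of the system: \begin{align*} F_1 &= \Big(p_Rp_Sr-2p_R^2z+\frac{2p_S^2z}{r^2}\Big)\cos(2\theta) + \Big(\frac{4p_Rp_Sz}{r}-p_S^2+\frac{kr^2}{\sqrt{r^4+16z^2}}\Big)\sin(2\theta),\\ F_2 &= -\Big(p_Rp_Sr-2p_R^2z+\frac{2p_S^2z}{r^2}\Big)\sin(2\theta) + \Big(\frac{4p_Rp_Sz}{r}-p_S^2+\frac{kr^2}{\sqrt{r^4+16z^2}}\Big)\cos(2\theta),\\ F_3 &= (2zp_R-rp_S)^2 + 4z^2\Big(\frac{p_S^2}{r^2}+\frac{2k}{\sqrt{r^4+16z^2}}\Big). \end{align*} Moreover, with $H = \frac12\big(p_R^2+\frac{p_S^2}{r^2}\big) - \frac{k}{\sqrt{r^4+16z^2}}$, any three of $H,F_1,F_2,F_3$ are functionally independent almost everywhere, and they satisfy the relation $F_1^2+F_2^2 = 2HF_3 + k^2$.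
   Context: A first integral is a function of $(r,\theta,z,p_R,p_S)$ constant along all solutions. The system describes nonholonomic motion on the Heisenberg group in the potential $-k/\sqrt{r^4+16z^2}$ in cylindrical coordinates, with Hamiltonian $H$. *)

theory Defs
  imports "HOL-Analysis.Analysis"
begin

text \<open>Phase space points (r, theta, z, p_R, p_S); the physical domain is r > 0.\<close>
type_synonym st = "real \<times> real \<times> real \<times> real \<times> real"

definition hvf :: "real \<Rightarrow> st \<Rightarrow> st" where
  "hvf k = (\<lambda>(r, \<theta>, z, pR, pS).
     (pR,
      pS / r\<^sup>2,
      pS / 2,
      pS\<^sup>2 / r ^ 3 - 2 * k * r ^ 3 / (r ^ 4 + 16 * z\<^sup>2) powr (3/2),
      - 8 * k * r\<^sup>2 * z / (r ^ 4 + 16 * z\<^sup>2) powr (3/2)))"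

definition in_dom :: "st \<Rightarrow> bool" where
  "in_dom x \<longleftrightarrow> fst x > 0"

definition is_solution :: "real \<Rightarrow> (real \<Rightarrow> st) \<Rightarrow> real set \<Rightarrow> bool" where
  "is_solution k \<gamma> I \<longleftrightarrow>
     (\<forall>t\<in>I. in_dom (\<gamma> t) \<and> (\<gamma> has_vector_derivative hvf k (\<gamma> t)) (at t within I))"

definition first_integral :: "real \<Rightarrow> (st \<Rightarrow> real) \<Rightarrow> bool" where
  "first_integral k F \<longleftrightarrow>
     (\<forall>\<gamma> I. is_interval I \<and> is_solution k \<gamma> I \<longrightarrow> (\<forall>s\<in>I. \<forall>t\<in>I. F (\<gamma> s) = F (\<gamma> t)))"

definition Ham :: "real \<Rightarrow> st \<Rightarrow> real" where
  "Ham k = (\<lambda>(r, \<theta>, z, pR, pS).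
     (pR\<^sup>2 + pS\<^sup>2 / r\<^sup>2) / 2 - k / sqrt (r ^ 4 + 16 * z\<^sup>2))"

definition F1 :: "real \<Rightarrow> st \<Rightarrow> real" where
  "F1 k = (\<lambda>(r, \<theta>, z, pR, pS).
     (pR * pS * r - 2 * pR\<^sup>2 * z + 2 * pS\<^sup>2 * z / r\<^sup>2) * cos (2 * \<theta>)
     + (4 * pR * pS * z / r - pS\<^sup>2 + k * r\<^sup>2 / sqrt (r ^ 4 + 16 * z\<^sup>2)) * sin (2 * \<theta>))"

definition F2 :: "real \<Rightarrow> st \<Rightarrow> real" where
  "F2 k = (\<lambda>(r, \<theta>, z, pR, pS).
     - (pR * pS * r - 2 * pR\<^sup>2 * z + 2 * pS\<^sup>2 * z / r\<^sup>2) * sin (2 * \<theta>)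
     + (4 * pR * pS * z / r - pS\<^sup>2 + k * r\<^sup>2 / sqrt (r ^ 4 + 16 * z\<^sup>2)) * cos (2 * \<theta>))"

definition F3 :: "real \<Rightarrow> st \<Rightarrow> real" where
  "F3 k = (\<lambda>(r, \<theta>, z, pR, pS).
     (2 * z * pR - r * pS)\<^sup>2 + 4 * z\<^sup>2 * (pS\<^sup>2 / r\<^sup>2 + 2 * k / sqrt (r ^ 4 + 16 * z\<^sup>2)))"

definition func_indep_at :: "(st \<Rightarrow> real) list \<Rightarrow> st \<Rightarrow> bool" where
  "func_indep_at fs x \<longleftrightarrow>
     (\<forall>f\<in>set fs. f differentiable (at x)) \<and>
     (\<forall>c :: nat \<Rightarrow> real.
        (\<forall>v. (\<Sum>i<length fs. c i * frechet_derivative (fs ! i) (at x) v) = 0)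
        \<longrightarrow> (\<forall>i<length fs. c i = 0))"

definition func_indep_ae :: "(st \<Rightarrow> real) list \<Rightarrow> bool" where
  "func_indep_ae fs \<longleftrightarrow> (AE x in lborel. in_dom x \<longrightarrow> func_indep_at fs x)"

end

(*
  F1 and F2 are the real and imaginary parts of (Fcos + i Fsin) e^(-2 i theta), where Fcos and Fsin
  do not depend on theta. Along the vector field, Fcos + i Fsin rotates with angular velocity
  2 d theta/dt, which the factor e^(-2 i theta) exactly undoes; so F1 and F2 are first integrals,
  and F1^2 + F2^2 = Fcos^2 + Fsin^2 = 2 H F3 + k^2. That F3 is conserved is a direct computation.

  For independence: d/dtheta kills H and F3 and maps F1 to 2 F2, and the (p_R, p_S)-minor of (H, F3)
  is 2 r Fcos, so dH, dF1, dF3 are independent wherever F2 Fcos =/= 0. Differentiating the relation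
  gives F1 dF1 + F2 dF2 = F3 dH + H dF3, so dF2 can replace any differential whose coefficient is
  nonzero; this yields the other three triples wherever H, F1 and F3 are also nonzero. Each of
  H, F1, F2, F3, Fcos is quadratic in p_S with a leading coefficient that vanishes for at most one
  z, so by Fubini all of them are nonzero almost everywhere.
*)
theory Submission
  imports Defs "HOL-Library.Quadratic_Discriminant"
begin

lemma radicand_pos: "0 < r \<Longrightarrow> 0 < r ^ 4 + 16 * z\<^sup>2" for r z :: real
  by (simp add: add_pos_nonneg)

lemma powr_three_halves: "0 < w \<Longrightarrow> w powr (3/2) = w * sqrt w"
  by (simp add: powr_add[of w 1 "1/2", simplified] powr_half_sqrt)

lemma in_dom_iff [simp]: "in_dom (r, \<theta>, z, pR, pS) \<longleftrightarrow> 0 < r"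
  by (simp add: in_dom_def)

lemma st_add_scaleR:
  "(r, \<theta>, z, pR, pS) + s *\<^sub>R (a, b, c, d, e)
    = (r + s * a, \<theta> + s * b, z + s * c, pR + s * d, pS + s * e)"
  by simp

lemma hvf_eq_sqrt:
  assumes "0 < r" "sqrt (r ^ 4 + 16 * z\<^sup>2) = S"
  shows "hvf k (r, \<theta>, z, pR, pS)
    = (pR, pS / r\<^sup>2, pS / 2, pS\<^sup>2 / r ^ 3 - 2 * k * r ^ 3 / S ^ 3, - 8 * k * r\<^sup>2 * z / S ^ 3)"
proof -
  have "S\<^sup>2 = r ^ 4 + 16 * z\<^sup>2"
    using assms(2) radicand_pos[OF assms(1), of z] by (metis less_imp_le real_sqrt_pow2)
  then have "(r ^ 4 + 16 * z\<^sup>2) powr (3/2) = S ^ 3"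
    using powr_three_halves[OF radicand_pos[OF assms(1)]] assms(2)
    by (simp add: power2_eq_square power3_eq_cube)
  then show ?thesis by (simp add: hvf_def)
qed

section \<open>Amplitudes of F1 and F2\<close>

definition Fcos :: "st \<Rightarrow> real" where
  "Fcos = (\<lambda>(r, \<theta>, z, pR, pS). pR * pS * r - 2 * pR\<^sup>2 * z + 2 * pS\<^sup>2 * z / r\<^sup>2)"

definition Fsin :: "real \<Rightarrow> st \<Rightarrow> real" where
  "Fsin k = (\<lambda>(r, \<theta>, z, pR, pS). 4 * pR * pS * z / r - pS\<^sup>2 + k * r\<^sup>2 / sqrt (r ^ 4 + 16 * z\<^sup>2))"

lemma F1_eq: "F1 k x = Fcos x * cos (2 * fst (snd x)) + Fsin k x * sin (2 * fst (snd x))"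
  by (simp add: F1_def Fcos_def Fsin_def case_prod_unfold)

lemma F2_eq: "F2 k x = Fsin k x * cos (2 * fst (snd x)) - Fcos x * sin (2 * fst (snd x))"
  by (simp add: F2_def Fcos_def Fsin_def case_prod_unfold algebra_simps)

lemma F1_sq_plus_F2_sq: "(F1 k x)\<^sup>2 + (F2 k x)\<^sup>2 = (Fcos x)\<^sup>2 + (Fsin k x)\<^sup>2"
proof -
  have "(F1 k x)\<^sup>2 + (F2 k x)\<^sup>2
    = ((Fcos x)\<^sup>2 + (Fsin k x)\<^sup>2) * ((sin (2 * fst (snd x)))\<^sup>2 + (cos (2 * fst (snd x)))\<^sup>2)"
    unfolding F1_eq F2_eq by algebra
  then show ?thesis by simp
qed

lemma Fcos_sq_plus_Fsin_sq:
  assumes "0 < r"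
  shows "(Fcos (r, \<theta>, z, pR, pS))\<^sup>2 + (Fsin k (r, \<theta>, z, pR, pS))\<^sup>2
    = 2 * Ham k (r, \<theta>, z, pR, pS) * F3 k (r, \<theta>, z, pR, pS) + k\<^sup>2"
proof -
  obtain S where S: "sqrt (r ^ 4 + 16 * z\<^sup>2) = S" "0 < S" "S\<^sup>2 = r ^ 4 + 16 * z\<^sup>2"
    using radicand_pos[OF assms] by auto
  have nz: "r \<noteq> 0" "S \<noteq> 0" using assms S(2) by auto
  show ?thesis
    apply (simp add: Fcos_def Fsin_def Ham_def F3_def S(1))
    apply (simp add: field_simps nz)
    using S(3) by algebra
qed

lemma F1_sq_plus_F2_sq_eq_Ham_F3:
  assumes "in_dom x"
  shows "(F1 k x)\<^sup>2 + (F2 k x)\<^sup>2 = 2 * Ham k x * F3 k x + k\<^sup>2"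
proof -
  obtain r \<theta> z pR pS where x: "x = (r, \<theta>, z, pR, pS)" by (metis prod.exhaust)
  have "0 < r" using assms x by (simp add: in_dom_def)
  then show ?thesis unfolding F1_sq_plus_F2_sq x by (rule Fcos_sq_plus_Fsin_sq)
qed

section \<open>First integrals\<close>

lemma frechet_derivative_eq_directional:
  fixes f :: "'a::real_normed_vector \<Rightarrow> real"
  assumes "f differentiable at x" and "((\<lambda>s. f (x + s *\<^sub>R v)) has_real_derivative d) (at 0)"
  shows "frechet_derivative f (at x) v = d"
proof -
  let ?D = "frechet_derivative f (at x)"
  have "((\<lambda>s. x + s *\<^sub>R v) has_derivative (\<lambda>s. s *\<^sub>R v)) (at 0)"
    by (auto intro!: derivative_eq_intros)
  moreover have "(f has_derivative ?D) (at (x + 0 *\<^sub>R v))"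
    using assms(1) by (simp add: frechet_derivative_works)
  ultimately have "((\<lambda>s. f (x + s *\<^sub>R v)) has_derivative (\<lambda>s. ?D (s *\<^sub>R v))) (at 0)"
    by (rule has_derivative_compose)
  moreover have "?D (s *\<^sub>R v) = s * ?D v" for s
    using assms(1) by (simp add: frechet_derivative_works has_derivative_linear linear_scale)
  ultimately have "((\<lambda>s. f (x + s *\<^sub>R v)) has_real_derivative ?D v) (at 0)"
    by (simp add: has_field_derivative_def mult_commute_abs)
  then show ?thesis using assms(2) by (rule DERIV_unique)
qed

lemma differentiable_at_in_dom:
  assumes "in_dom x"
  shows "Ham k differentiable at x" and "F1 k differentiable at x"
    and "F2 k differentiable at x" and "F3 k differentiable at x"
proof -
  have r: "0 < fst x" "fst x \<noteq> 0" using assms by (auto simp: in_dom_def)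
  have w: "0 < fst x ^ 4 + 16 * (fst (snd (snd x)))\<^sup>2" "fst x ^ 4 + 16 * (fst (snd (snd x)))\<^sup>2 \<noteq> 0"
    using radicand_pos[OF r(1), of "fst (snd (snd x))"] by auto
  show "Ham k differentiable at x"
    unfolding Ham_def case_prod_unfold differentiable_def
    by (rule exI) (auto intro!: derivative_eq_intros simp: r w)
  show "F1 k differentiable at x"
    unfolding F1_def case_prod_unfold differentiable_def
    by (rule exI) (auto intro!: derivative_eq_intros simp: r w)
  show "F2 k differentiable at x"
    unfolding F2_def case_prod_unfold differentiable_def
    by (rule exI) (auto intro!: derivative_eq_intros simp: r w)
  show "F3 k differentiable at x"
    unfolding F3_def case_prod_unfold differentiable_def
    by (rule exI) (auto intro!: derivative_eq_intros simp: r w)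
qed

lemma Fcos_derivative_along_hvf:
  assumes r: "0 < r"
  shows "((\<lambda>s. Fcos ((r, \<theta>, z, pR, pS) + s *\<^sub>R hvf k (r, \<theta>, z, pR, pS))) has_real_derivative
    - 2 * (pS / r\<^sup>2) * Fsin k (r, \<theta>, z, pR, pS)) (at 0)"
proof -
  obtain S where S: "sqrt (r ^ 4 + 16 * z\<^sup>2) = S" "0 < S" "S\<^sup>2 = r ^ 4 + 16 * z\<^sup>2"
    using radicand_pos[OF r] by auto
  have nz: "r \<noteq> 0" "S \<noteq> 0" using r S(2) by auto
  show ?thesis
    unfolding hvf_eq_sqrt[OF r S(1)] st_add_scaleR Fcos_def
    apply (rule DERIV_cong)
     apply (rule derivative_eq_intros refl | simp add: nz)+
    apply (simp add: Fsin_def S(1))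
    apply (simp add: field_simps nz)
    using S(3) by algebra
qed

lemma Fsin_derivative_along_hvf:
  assumes r: "0 < r"
  shows "((\<lambda>s. Fsin k ((r, \<theta>, z, pR, pS) + s *\<^sub>R hvf k (r, \<theta>, z, pR, pS))) has_real_derivative
    2 * (pS / r\<^sup>2) * Fcos (r, \<theta>, z, pR, pS)) (at 0)"
proof -
  obtain S where S: "sqrt (r ^ 4 + 16 * z\<^sup>2) = S" "0 < S" "S\<^sup>2 = r ^ 4 + 16 * z\<^sup>2"
    using radicand_pos[OF r] by auto
  have nz: "r \<noteq> 0" "S \<noteq> 0" "r ^ 4 + 16 * z\<^sup>2 \<noteq> 0" "\<not> r ^ 4 + 16 * z\<^sup>2 < 0"
    using r S(2) radicand_pos[OF r, of z] by auto
  show ?thesis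
    unfolding hvf_eq_sqrt[OF r S(1)] st_add_scaleR Fsin_def
    apply (rule DERIV_cong)
     apply (rule derivative_eq_intros refl | simp add: nz radicand_pos[OF r])+
    apply (simp add: Fcos_def S(1))
    apply (simp only: flip: S(3))
    apply (simp add: field_simps nz)
    using S(3) by algebra
qed

lemma F1_derivative_along_hvf:
  assumes r: "0 < r"
  shows "((\<lambda>s. F1 k ((r, \<theta>, z, pR, pS) + s *\<^sub>R hvf k (r, \<theta>, z, pR, pS)))
    has_real_derivative 0) (at 0)"
proof -
  let ?x = "(r, \<theta>, z, pR, pS)"
  have "(\<lambda>s. F1 k (?x + s *\<^sub>R hvf k ?x))
    = (\<lambda>s. Fcos (?x + s *\<^sub>R hvf k ?x) * cos (2 * (\<theta> + s * (pS / r\<^sup>2)))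
        + Fsin k (?x + s *\<^sub>R hvf k ?x) * sin (2 * (\<theta> + s * (pS / r\<^sup>2))))" (is "_ = ?G")
    by (simp add: F1_eq hvf_def)
  moreover have "(?G has_real_derivative 0) (at 0)"
    apply (rule DERIV_cong)
     apply (rule Fcos_derivative_along_hvf[OF r] Fsin_derivative_along_hvf[OF r] derivative_eq_intros refl
        | simp)+
    done
  ultimately show ?thesis by simp
qed

lemma F2_derivative_along_hvf:
  assumes r: "0 < r"
  shows "((\<lambda>s. F2 k ((r, \<theta>, z, pR, pS) + s *\<^sub>R hvf k (r, \<theta>, z, pR, pS)))
    has_real_derivative 0) (at 0)"
proof -
  let ?x = "(r, \<theta>, z, pR, pS)"
  have "(\<lambda>s. F2 k (?x + s *\<^sub>R hvf k ?x))
    = (\<lambda>s. Fsin k (?x + s *\<^sub>R hvf k ?x) * cos (2 * (\<theta> + s * (pS / r\<^sup>2)))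
        - Fcos (?x + s *\<^sub>R hvf k ?x) * sin (2 * (\<theta> + s * (pS / r\<^sup>2))))" (is "_ = ?G")
    by (simp add: F2_eq hvf_def)
  moreover have "(?G has_real_derivative 0) (at 0)"
    apply (rule DERIV_cong)
     apply (rule Fcos_derivative_along_hvf[OF r] Fsin_derivative_along_hvf[OF r] derivative_eq_intros refl
        | simp)+
    done
  ultimately show ?thesis by simp
qed

lemma F3_derivative_along_hvf:
  assumes r: "0 < r"
  shows "((\<lambda>s. F3 k ((r, \<theta>, z, pR, pS) + s *\<^sub>R hvf k (r, \<theta>, z, pR, pS)))
    has_real_derivative 0) (at 0)"
proof -
  obtain S where S: "sqrt (r ^ 4 + 16 * z\<^sup>2) = S" "0 < S" "S\<^sup>2 = r ^ 4 + 16 * z\<^sup>2"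
    using radicand_pos[OF r] by auto
  have nz: "r \<noteq> 0" "S \<noteq> 0" "r ^ 4 + 16 * z\<^sup>2 \<noteq> 0" "\<not> r ^ 4 + 16 * z\<^sup>2 < 0"
    using r S(2) radicand_pos[OF r, of z] by auto
  show ?thesis
    unfolding hvf_eq_sqrt[OF r S(1)] st_add_scaleR F3_def
    apply (rule DERIV_cong)
     apply (rule derivative_eq_intros refl | simp add: nz radicand_pos[OF r])+
    apply (simp add: S(1))
    apply (simp only: flip: S(3))
    apply (simp add: field_simps nz)
    using S(3) by algebra
qed

lemma first_integral_if_derivative_along_hvf_zero:
  assumes diff: "\<And>x. in_dom x \<Longrightarrow> F differentiable at x"
    and deriv: "\<And>r \<theta> z pR pS. 0 < r \<Longrightarrow>
      ((\<lambda>s. F ((r, \<theta>, z, pR, pS) + s *\<^sub>R hvf k (r, \<theta>, z, pR, pS))) has_real_derivative 0) (at 0)"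
  shows "first_integral k F"
  unfolding first_integral_def
proof (intro allI impI)
  fix \<gamma> :: "real \<Rightarrow> st" and I :: "real set"
  assume sol: "is_interval I \<and> is_solution k \<gamma> I"
  have "\<exists>c. \<forall>t\<in>I. F (\<gamma> t) = c"
  proof (rule has_derivative_zero_constant)
    show "convex I" using sol by (simp add: is_interval_convex)
  next
    fix t assume t: "t \<in> I"
    have dom: "in_dom (\<gamma> t)" and "(\<gamma> has_vector_derivative hvf k (\<gamma> t)) (at t within I)"
      using sol t by (auto simp: is_solution_def)
    then have "(\<gamma> has_derivative (\<lambda>h. h *\<^sub>R hvf k (\<gamma> t))) (at t within I)"
      by (simp add: has_vector_derivative_def)
    moreover have "(F has_derivative frechet_derivative F (at (\<gamma> t))) (at (\<gamma> t))"
      using diff[OF dom] by (simp add: frechet_derivative_works)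
    ultimately have "((\<lambda>s. F (\<gamma> s)) has_derivative
        (\<lambda>h. frechet_derivative F (at (\<gamma> t)) (h *\<^sub>R hvf k (\<gamma> t)))) (at t within I)"
      by (rule has_derivative_compose)
    moreover have "frechet_derivative F (at (\<gamma> t)) (hvf k (\<gamma> t)) = 0"
    proof (rule frechet_derivative_eq_directional[OF diff[OF dom]])
      obtain r \<theta> z pR pS where "\<gamma> t = (r, \<theta>, z, pR, pS)" by (metis prod.exhaust)
      with dom deriv show "((\<lambda>s. F (\<gamma> t + s *\<^sub>R hvf k (\<gamma> t))) has_real_derivative 0) (at 0)"
        by simp
    qed
    then have "frechet_derivative F (at (\<gamma> t)) (h *\<^sub>R hvf k (\<gamma> t)) = 0" for h
      using diff[OF dom] by (simp add: frechet_derivative_works has_derivative_linear linear_scale)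
    ultimately show "((\<lambda>s. F (\<gamma> s)) has_derivative (\<lambda>h. 0)) (at t within I)"
      by simp
  qed
  then show "\<forall>s\<in>I. \<forall>t\<in>I. F (\<gamma> s) = F (\<gamma> t)" by metis
qed

section \<open>Independence of the differentials\<close>

definition lin_indep3 :: "('a \<Rightarrow> real) \<Rightarrow> ('a \<Rightarrow> real) \<Rightarrow> ('a \<Rightarrow> real) \<Rightarrow> bool" where
  "lin_indep3 f g h \<longleftrightarrow> (\<forall>a b c. (\<forall>v. a * f v + b * g v + c * h v = 0) \<longrightarrow> a = 0 \<and> b = 0 \<and> c = 0)"

lemma func_indep_at_3_iff:
  fixes x :: st
  shows "func_indep_at [f, g, h] x \<longleftrightarrow>
    f differentiable at x \<and> g differentiable at x \<and> h differentiable at x \<and>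
    lin_indep3 (frechet_derivative f (at x)) (frechet_derivative g (at x)) (frechet_derivative h (at x))"
proof -
  have sum: "(\<Sum>i<length [f, g, h]. c i * frechet_derivative ([f, g, h] ! i) (at x) v)
    = c 0 * frechet_derivative f (at x) v + c 1 * frechet_derivative g (at x) v
      + c 2 * frechet_derivative h (at x) v" for c :: "nat \<Rightarrow> real" and v
    by (simp add: eval_nat_numeral)
  have three: "(\<forall>i<length [f, g, h]. c i = 0) \<longleftrightarrow> c 0 = 0 \<and> c 1 = 0 \<and> c 2 = 0" for c :: "nat \<Rightarrow> real"
    by (auto simp: less_Suc_eq eval_nat_numeral)
  let ?f' = "frechet_derivative f (at x)" and ?g' = "frechet_derivative g (at x)"
    and ?h' = "frechet_derivative h (at x)"
  have coeffs: "(\<forall>c :: nat \<Rightarrow> real. (\<forall>v. c 0 * ?f' v + c 1 * ?g' v + c 2 * ?h' v = 0)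
        \<longrightarrow> c 0 = 0 \<and> c 1 = 0 \<and> c 2 = 0)
      \<longleftrightarrow> lin_indep3 ?f' ?g' ?h'" (is "?L \<longleftrightarrow> _")
  proof
    assume ?L
    show "lin_indep3 ?f' ?g' ?h'"
      unfolding lin_indep3_def
    proof (intro allI impI)
      fix a b c :: real
      assume "\<forall>v. a * ?f' v + b * ?g' v + c * ?h' v = 0"
      then show "a = 0 \<and> b = 0 \<and> c = 0" using spec[OF \<open>?L\<close>, of "\<lambda>i. [a, b, c] ! i"] by simp
    qed
  next
    assume "lin_indep3 ?f' ?g' ?h'"
    then show ?L unfolding lin_indep3_def by blast
  qed
  show ?thesis
    unfolding func_indep_at_def sum three coeffs by simp
qed

lemma lin_indep3_swap12:
  assumes "lin_indep3 f g h"
  shows "lin_indep3 g f h"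
  unfolding lin_indep3_def
proof (intro allI impI)
  fix a b c
  assume "\<forall>v. a * g v + b * f v + c * h v = 0"
  then have "\<forall>v. b * f v + a * g v + c * h v = 0" by (simp add: add_ac)
  with assms show "a = 0 \<and> b = 0 \<and> c = 0" unfolding lin_indep3_def by blast
qed

lemma lin_indep3_swap23:
  assumes "lin_indep3 f g h"
  shows "lin_indep3 f h g"
  unfolding lin_indep3_def
proof (intro allI impI)
  fix a b c
  assume "\<forall>v. a * f v + b * h v + c * g v = 0"
  then have "\<forall>v. a * f v + c * g v + b * h v = 0" by (simp add: add_ac)
  with assms show "a = 0 \<and> b = 0 \<and> c = 0" unfolding lin_indep3_def by blast
qed

lemma lin_indep3_exchange:
  assumes indep: "lin_indep3 f g h" and "\<alpha> \<noteq> 0"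
    and rel: "\<And>v. \<alpha> * f v = \<beta> * g v + \<gamma> * h v + \<delta> * e v"
  shows "lin_indep3 e g h"
  unfolding lin_indep3_def
proof (intro allI impI)
  fix a b c
  assume comb: "\<forall>v. a * e v + b * g v + c * h v = 0"
  have "a = 0"
  proof (rule ccontr)
    assume "a \<noteq> 0"
    have "\<alpha> * f v + (\<delta> * b / a - \<beta>) * g v + (\<delta> * c / a - \<gamma>) * h v = 0" for v
    proof -
      have "a * (\<alpha> * f v + (\<delta> * b / a - \<beta>) * g v + (\<delta> * c / a - \<gamma>) * h v)
        = a * (\<alpha> * f v - \<beta> * g v - \<gamma> * h v - \<delta> * e v) + \<delta> * (a * e v + b * g v + c * h v)"
        using \<open>a \<noteq> 0\<close> by (simp add: field_simps)
      also have "\<dots> = 0" using rel[of v] comb by simp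
      finally show ?thesis using \<open>a \<noteq> 0\<close> by simp
    qed
    then have "\<alpha> = 0" using indep unfolding lin_indep3_def by blast
    with \<open>\<alpha> \<noteq> 0\<close> show False ..
  qed
  moreover have "\<forall>v. 0 * f v + b * g v + c * h v = 0" using comb \<open>a = 0\<close> by simp
  then have "b = 0 \<and> c = 0" using indep unfolding lin_indep3_def by blast
  ultimately show "a = 0 \<and> b = 0 \<and> c = 0" by simp
qed

lemma differential_relation:
  assumes x: "in_dom x"
  shows "F1 k x * frechet_derivative (F1 k) (at x) v + F2 k x * frechet_derivative (F2 k) (at x) v
    = F3 k x * frechet_derivative (Ham k) (at x) v + Ham k x * frechet_derivative (F3 k) (at x) v"
proof -
  let ?G = "\<lambda>y. (F1 k y)\<^sup>2 + (F2 k y)\<^sup>2 - 2 * Ham k y * F3 k y"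
  let ?dH = "frechet_derivative (Ham k) (at x)" and ?d1 = "frechet_derivative (F1 k) (at x)"
  let ?d2 = "frechet_derivative (F2 k) (at x)" and ?d3 = "frechet_derivative (F3 k) (at x)"
  have "(?G has_derivative (\<lambda>v. 2 * F1 k x * ?d1 v + 2 * F2 k x * ?d2 v
      - 2 * (Ham k x * ?d3 v + ?dH v * F3 k x))) (at x)"
    using differentiable_at_in_dom[OF x, of k]
    by (auto intro!: derivative_eq_intros simp: frechet_derivative_works)
  moreover have "(?G has_derivative (\<lambda>v. 0)) (at x)"
  proof (rule has_derivative_transform_within_open)
    show "((\<lambda>y. k\<^sup>2) has_derivative (\<lambda>v. 0)) (at x)" by (rule has_derivative_const)
    show "open {y :: st. 0 < fst y}" by (intro open_Collect_less continuous_intros)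
    show "x \<in> {y. 0 < fst y}" using x by (simp add: in_dom_def)
    show "\<And>y. y \<in> {y. 0 < fst y} \<Longrightarrow> k\<^sup>2 = ?G y"
      using F1_sq_plus_F2_sq_eq_Ham_F3 by (simp add: in_dom_def)
  qed
  ultimately have "(\<lambda>v. 2 * F1 k x * ?d1 v + 2 * F2 k x * ?d2 v - 2 * (Ham k x * ?d3 v + ?dH v * F3 k x))
      = (\<lambda>v. 0)"
    by (rule has_derivative_unique)
  from fun_cong[OF this, of v] show ?thesis by (simp add: algebra_simps)
qed

lemma Ham_partial_derivatives:
  assumes r: "0 < r"
  shows "frechet_derivative (Ham k) (at (r, \<theta>, z, pR, pS)) (0, 1, 0, 0, 0) = 0"
    and "frechet_derivative (Ham k) (at (r, \<theta>, z, pR, pS)) (0, 0, 0, 1, 0) = pR"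
    and "frechet_derivative (Ham k) (at (r, \<theta>, z, pR, pS)) (0, 0, 0, 0, 1) = pS / r\<^sup>2"
proof -
  have diff: "Ham k differentiable at (r, \<theta>, z, pR, pS)"
    using r by (simp add: differentiable_at_in_dom)
  obtain S where S: "sqrt (r ^ 4 + 16 * z\<^sup>2) = S" "S \<noteq> 0"
    using radicand_pos[OF r, of z] by auto
  have "r \<noteq> 0" using r by simp
  note simps = st_add_scaleR Ham_def S \<open>r \<noteq> 0\<close>
  show "frechet_derivative (Ham k) (at (r, \<theta>, z, pR, pS)) (0, 1, 0, 0, 0) = 0"
    by (rule frechet_derivative_eq_directional[OF diff]) (simp add: simps)
  show "frechet_derivative (Ham k) (at (r, \<theta>, z, pR, pS)) (0, 0, 0, 1, 0) = pR"
    by (rule frechet_derivative_eq_directional[OF diff])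
      (simp add: simps, rule DERIV_cong, (rule derivative_eq_intros refl | simp add: simps)+)
  show "frechet_derivative (Ham k) (at (r, \<theta>, z, pR, pS)) (0, 0, 0, 0, 1) = pS / r\<^sup>2"
    by (rule frechet_derivative_eq_directional[OF diff])
      (simp add: simps, rule DERIV_cong, (rule derivative_eq_intros refl | simp add: simps)+,
        simp add: field_simps eval_nat_numeral)
qed

lemma F3_partial_derivatives:
  assumes r: "0 < r"
  shows "frechet_derivative (F3 k) (at (r, \<theta>, z, pR, pS)) (0, 1, 0, 0, 0) = 0"
    and "frechet_derivative (F3 k) (at (r, \<theta>, z, pR, pS)) (0, 0, 0, 1, 0) = 4 * z * (2 * z * pR - r * pS)"
    and "frechet_derivative (F3 k) (at (r, \<theta>, z, pR, pS)) (0, 0, 0, 0, 1)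
      = 8 * z\<^sup>2 * pS / r\<^sup>2 - 2 * r * (2 * z * pR - r * pS)"
proof -
  have diff: "F3 k differentiable at (r, \<theta>, z, pR, pS)"
    using r by (simp add: differentiable_at_in_dom)
  obtain S where S: "sqrt (r ^ 4 + 16 * z\<^sup>2) = S" "S \<noteq> 0"
    using radicand_pos[OF r, of z] by auto
  have "r \<noteq> 0" using r by simp
  note simps = st_add_scaleR F3_def S \<open>r \<noteq> 0\<close>
  show "frechet_derivative (F3 k) (at (r, \<theta>, z, pR, pS)) (0, 1, 0, 0, 0) = 0"
    by (rule frechet_derivative_eq_directional[OF diff]) (simp add: simps)
  show "frechet_derivative (F3 k) (at (r, \<theta>, z, pR, pS)) (0, 0, 0, 1, 0) = 4 * z * (2 * z * pR - r * pS)"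
    by (rule frechet_derivative_eq_directional[OF diff])
      (simp add: simps, rule DERIV_cong, (rule derivative_eq_intros refl | simp add: simps)+)
  show "frechet_derivative (F3 k) (at (r, \<theta>, z, pR, pS)) (0, 0, 0, 0, 1)
      = 8 * z\<^sup>2 * pS / r\<^sup>2 - 2 * r * (2 * z * pR - r * pS)"
    by (rule frechet_derivative_eq_directional[OF diff])
      (simp add: simps, rule DERIV_cong, (rule derivative_eq_intros refl | simp add: simps)+,
        simp add: field_simps eval_nat_numeral)
qed

lemma F1_partial_derivative_angle:
  assumes r: "0 < r"
  shows "frechet_derivative (F1 k) (at (r, \<theta>, z, pR, pS)) (0, 1, 0, 0, 0) = 2 * F2 k (r, \<theta>, z, pR, pS)"
proof (rule frechet_derivative_eq_directional)
  show "F1 k differentiable at (r, \<theta>, z, pR, pS)"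
    using r by (simp add: differentiable_at_in_dom)
  define A where "A = Fcos (r, \<theta>, z, pR, pS)"
  define B where "B = Fsin k (r, \<theta>, z, pR, pS)"
  have "(\<lambda>s. F1 k ((r, \<theta>, z, pR, pS) + s *\<^sub>R (0, 1, 0, 0, 0)))
      = (\<lambda>s. A * cos (2 * \<theta> + 2 * s) + B * sin (2 * \<theta> + 2 * s))"
    by (simp add: F1_eq st_add_scaleR A_def B_def Fcos_def Fsin_def algebra_simps)
  moreover have "((\<lambda>s. A * cos (2 * \<theta> + 2 * s) + B * sin (2 * \<theta> + 2 * s))
      has_real_derivative 2 * F2 k (r, \<theta>, z, pR, pS)) (at 0)"
    by (rule DERIV_cong, (rule derivative_eq_intros refl)+) (simp add: F2_eq A_def B_def)
  ultimately show "((\<lambda>s. F1 k ((r, \<theta>, z, pR, pS) + s *\<^sub>R (0, 1, 0, 0, 0)))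
      has_real_derivative 2 * F2 k (r, \<theta>, z, pR, pS)) (at 0)"
    by simp
qed

lemma lin_indep3_Ham_F1_F3:
  assumes r: "0 < r" and F2: "F2 k (r, \<theta>, z, pR, pS) \<noteq> 0" and Fcos: "Fcos (r, \<theta>, z, pR, pS) \<noteq> 0"
  shows "lin_indep3 (frechet_derivative (Ham k) (at (r, \<theta>, z, pR, pS)))
    (frechet_derivative (F1 k) (at (r, \<theta>, z, pR, pS))) (frechet_derivative (F3 k) (at (r, \<theta>, z, pR, pS)))"
  unfolding lin_indep3_def
proof (intro allI impI)
  fix a b c
  let ?x = "(r, \<theta>, z, pR, pS)"
  assume comb: "\<forall>v. a * frechet_derivative (Ham k) (at ?x) v + b * frechet_derivative (F1 k) (at ?x) v
    + c * frechet_derivative (F3 k) (at ?x) v = 0"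
  have "b * (2 * F2 k ?x) = 0"
    using comb[rule_format, of "(0, 1, 0, 0, 0)"]
    by (simp add: Ham_partial_derivatives[OF r] F3_partial_derivatives[OF r]
        F1_partial_derivative_angle[OF r])
  with F2 have b: "b = 0" by simp
  define F3R where "F3R = 4 * z * (2 * z * pR - r * pS)"
  define F3S where "F3S = 8 * z\<^sup>2 * pS / r\<^sup>2 - 2 * r * (2 * z * pR - r * pS)"
  have eqR: "a * pR + c * F3R = 0"
    using comb[rule_format, of "(0, 0, 0, 1, 0)"] b
    by (simp add: Ham_partial_derivatives[OF r] F3_partial_derivatives[OF r] F3R_def)
  have eqS: "a * (pS / r\<^sup>2) + c * F3S = 0"
    using comb[rule_format, of "(0, 0, 0, 0, 1)"] b
    by (simp add: Ham_partial_derivatives[OF r] F3_partial_derivatives[OF r] F3S_def)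
  have minor: "pR * F3S - pS / r\<^sup>2 * F3R = 2 * r * Fcos ?x"
    using r by (simp add: F3R_def F3S_def Fcos_def field_simps) algebra
  have "c * (2 * r * Fcos ?x) = pR * (a * (pS / r\<^sup>2) + c * F3S) - pS / r\<^sup>2 * (a * pR + c * F3R)"
    unfolding minor[symmetric] using r by (simp add: field_simps)
  also have "\<dots> = 0" using eqR eqS by simp
  finally have c: "c = 0" using r Fcos by simp
  have "a * (2 * r * Fcos ?x) = F3S * (a * pR + c * F3R) - F3R * (a * (pS / r\<^sup>2) + c * F3S)"
    unfolding minor[symmetric] using r by (simp add: field_simps)
  also have "\<dots> = 0" using eqR eqS by simp
  finally have "a = 0" using r Fcos by simp
  with b c show "a = 0 \<and> b = 0 \<and> c = 0" by simp
qed

lemma func_indep_at_triples: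
  assumes x: "in_dom x"
    and nonzero: "Ham k x \<noteq> 0" "F1 k x \<noteq> 0" "F2 k x \<noteq> 0" "F3 k x \<noteq> 0" "Fcos x \<noteq> 0"
  shows "func_indep_at [Ham k, F1 k, F2 k] x" and "func_indep_at [Ham k, F1 k, F3 k] x"
    and "func_indep_at [Ham k, F2 k, F3 k] x" and "func_indep_at [F1 k, F2 k, F3 k] x"
proof -
  let ?dH = "frechet_derivative (Ham k) (at x)" and ?d1 = "frechet_derivative (F1 k) (at x)"
  let ?d2 = "frechet_derivative (F2 k) (at x)" and ?d3 = "frechet_derivative (F3 k) (at x)"
  obtain r \<theta> z pR pS where xs: "x = (r, \<theta>, z, pR, pS)" by (metis prod.exhaust)
  have H13: "lin_indep3 ?dH ?d1 ?d3"
    using x nonzero(3,5) unfolding xs by (intro lin_indep3_Ham_F1_F3) simp_all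
  note rel = differential_relation[OF x, of k]
  have "lin_indep3 ?d2 ?dH ?d1"
  proof (rule lin_indep3_exchange)
    show "lin_indep3 ?d3 ?dH ?d1" by (rule lin_indep3_swap12[OF lin_indep3_swap23[OF H13]])
    show "Ham k x \<noteq> 0" by (fact nonzero(1))
    show "Ham k x * ?d3 v = - F3 k x * ?dH v + F1 k x * ?d1 v + F2 k x * ?d2 v" for v
      using rel[of v] by simp
  qed
  then have H12: "lin_indep3 ?dH ?d1 ?d2" by (rule lin_indep3_swap23[OF lin_indep3_swap12])
  have "lin_indep3 ?d2 ?dH ?d3"
  proof (rule lin_indep3_exchange)
    show "lin_indep3 ?d1 ?dH ?d3" using H13 by (rule lin_indep3_swap12)
    show "F1 k x \<noteq> 0" by (fact nonzero(2))
    show "F1 k x * ?d1 v = F3 k x * ?dH v + Ham k x * ?d3 v + - F2 k x * ?d2 v" for v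
      using rel[of v] by simp
  qed
  then have H23: "lin_indep3 ?dH ?d2 ?d3" by (rule lin_indep3_swap12)
  have "lin_indep3 ?d2 ?d1 ?d3"
  proof (rule lin_indep3_exchange)
    show "lin_indep3 ?dH ?d1 ?d3" by (fact H13)
    show "F3 k x \<noteq> 0" by (fact nonzero(4))
    show "F3 k x * ?dH v = F1 k x * ?d1 v + - Ham k x * ?d3 v + F2 k x * ?d2 v" for v
      using rel[of v] by simp
  qed
  then have "lin_indep3 ?d1 ?d2 ?d3" by (rule lin_indep3_swap12)
  with H12 H13 H23 differentiable_at_in_dom[OF x, of k]
  show "func_indep_at [Ham k, F1 k, F2 k] x" "func_indep_at [Ham k, F1 k, F3 k] x"
    "func_indep_at [Ham k, F2 k, F3 k] x" "func_indep_at [F1 k, F2 k, F3 k] x"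
    by (simp_all add: func_indep_at_3_iff)
qed

section \<open>Non-vanishing almost everywhere\<close>

lemma AE_lborel_prod:
  fixes P :: "'a::euclidean_space \<times> 'b::euclidean_space \<Rightarrow> bool"
  assumes "Measurable.pred borel P" and "AE a in lborel. AE b in lborel. P (a, b)"
  shows "AE x in lborel. P x"
proof -
  have "AE x in lborel \<Otimes>\<^sub>M lborel. P x"
  proof (rule lborel_pair.AE_pair_measure)
    show "{x \<in> space (lborel \<Otimes>\<^sub>M lborel). P x} \<in> sets (lborel \<Otimes>\<^sub>M lborel)"
      unfolding lborel_prod using assms(1) by measurable
  qed (fact assms(2))
  then show ?thesis unfolding lborel_prod .
qed

lemma pred_borel_section:
  fixes P :: "'a::euclidean_space \<times> 'b::euclidean_space \<Rightarrow> bool"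
  assumes "Measurable.pred borel P"
  shows "Measurable.pred borel (\<lambda>y. P (a, y))"
proof -
  have "(\<lambda>y. (a, y)) \<in> borel_measurable borel"
    by (intro borel_measurable_continuous_onI continuous_intros)
  then show ?thesis using assms by (rule measurable_compose)
qed

lemma AE_st_if_AE_sections:
  fixes P :: "st \<Rightarrow> bool"
  assumes P: "Measurable.pred borel P"
    and sections: "\<And>r \<theta>. AE z in lborel. \<forall>pR. AE pS in lborel. P (r, \<theta>, z, pR, pS)"
  shows "AE x in lborel. P x"
proof (rule AE_lborel_prod[OF P], rule AE_I2)
  fix r
  have P1: "Measurable.pred borel (\<lambda>y. P (r, y))" using P by (rule pred_borel_section)
  show "AE y in lborel. P (r, y)"
  proof (rule AE_lborel_prod[OF P1], rule AE_I2)
    fix \<theta>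
    have P2: "Measurable.pred borel (\<lambda>y. P (r, \<theta>, y))"
      using pred_borel_section[OF P1] by simp
    show "AE y in lborel. P (r, \<theta>, y)"
    proof (rule AE_lborel_prod[OF P2])
      show "AE z in lborel. AE y in lborel. P (r, \<theta>, z, y)"
        using sections[of r \<theta>]
      proof (rule eventually_mono)
        fix z
        have P3: "Measurable.pred borel (\<lambda>y. P (r, \<theta>, z, y))"
          using pred_borel_section[OF P2] by simp
        assume "\<forall>pR. AE pS in lborel. P (r, \<theta>, z, pR, pS)"
        then have "AE pR in lborel. AE pS in lborel. P (r, \<theta>, z, pR, pS)"
          by (auto intro!: AE_I2)
        then show "AE y in lborel. P (r, \<theta>, z, y)"
          by (rule AE_lborel_prod[OF P3])
      qed
    qed
  qed
qed

lemma AE_quadratic_nonzero: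
  fixes a b c :: real
  assumes "c \<noteq> 0"
  shows "AE x in lborel. a + b * x + c * x\<^sup>2 \<noteq> 0"
proof -
  have "AE x in lborel.
      x \<noteq> (- b + sqrt (discrim c b a)) / (2 * c) \<and> x \<noteq> (- b - sqrt (discrim c b a)) / (2 * c)"
    by (intro eventually_conj AE_lborel_singleton)
  then show ?thesis
  proof (rule eventually_mono)
    fix x
    assume "x \<noteq> (- b + sqrt (discrim c b a)) / (2 * c) \<and> x \<noteq> (- b - sqrt (discrim c b a)) / (2 * c)"
    then have "c * x\<^sup>2 + b * x + a \<noteq> 0" by (simp add: discriminant_iff[OF assms])
    then show "a + b * x + c * x\<^sup>2 \<noteq> 0" by linarith
  qed
qed

lemma AE_affine_nonzero:
  fixes a b :: real
  assumes "a \<noteq> 0 \<or> b \<noteq> 0"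
  shows "AE z in lborel. a * z + b \<noteq> 0"
proof (cases "a = 0")
  case True
  with assms show ?thesis by simp
next
  case False
  show ?thesis
    using AE_lborel_singleton[of "- b / a"]
    by (rule eventually_mono) (use False in \<open>auto simp: field_simps\<close>)
qed

lemma AE_in_dom_nonzero_if_quadratic_in_pS:
  fixes f :: "st \<Rightarrow> real" and c :: "real \<Rightarrow> real \<Rightarrow> real \<Rightarrow> real"
  assumes meas: "f \<in> borel_measurable borel"
    and quadratic: "\<And>r \<theta> z pR. 0 < r \<Longrightarrow> \<exists>a b. \<forall>pS. f (r, \<theta>, z, pR, pS) = a + b * pS + c r \<theta> z * pS\<^sup>2"
    and leading: "\<And>r \<theta>. 0 < r \<Longrightarrow> AE z in lborel. c r \<theta> z \<noteq> 0"
  shows "AE x in lborel. in_dom x \<longrightarrow> f x \<noteq> 0"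
proof (rule AE_st_if_AE_sections)
  have [measurable]: "(\<lambda>x :: st. fst x) \<in> borel_measurable borel"
    by (intro borel_measurable_continuous_onI continuous_intros)
  note meas[measurable]
  show "Measurable.pred borel (\<lambda>x. in_dom x \<longrightarrow> f x \<noteq> 0)"
    unfolding in_dom_def by measurable
  fix r \<theta>
  show "AE z in lborel. \<forall>pR. AE pS in lborel. in_dom (r, \<theta>, z, pR, pS) \<longrightarrow> f (r, \<theta>, z, pR, pS) \<noteq> 0"
  proof (cases "0 < r")
    case r: True
    show ?thesis using leading[OF r]
    proof (rule eventually_mono, intro allI)
      fix z pR assume "c r \<theta> z \<noteq> 0"
      obtain a b where "\<forall>pS. f (r, \<theta>, z, pR, pS) = a + b * pS + c r \<theta> z * pS\<^sup>2"
        using quadratic[OF r] by blast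
      with AE_quadratic_nonzero[OF \<open>c r \<theta> z \<noteq> 0\<close>, of a b]
      show "AE pS in lborel. in_dom (r, \<theta>, z, pR, pS) \<longrightarrow> f (r, \<theta>, z, pR, pS) \<noteq> 0"
        by simp
    qed
  qed simp
qed

lemma AE_Ham_nonzero: "AE x in lborel. in_dom x \<longrightarrow> Ham k x \<noteq> 0"
proof (rule AE_in_dom_nonzero_if_quadratic_in_pS[where c = "\<lambda>r \<theta> z. 1 / (2 * r\<^sup>2)"])
  show "Ham k \<in> borel_measurable borel"
    unfolding Ham_def case_prod_unfold borel_prod[symmetric] by measurable
  show "\<exists>a b. \<forall>pS. Ham k (r, \<theta>, z, pR, pS) = a + b * pS + 1 / (2 * r\<^sup>2) * pS\<^sup>2" for r \<theta> z pR
    by (intro exI[of _ "pR\<^sup>2 / 2 - k / sqrt (r ^ 4 + 16 * z\<^sup>2)"] exI[of _ 0] allI)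
      (simp add: Ham_def field_simps)
qed simp

lemma AE_F1_nonzero: "AE x in lborel. in_dom x \<longrightarrow> F1 k x \<noteq> 0"
proof (rule AE_in_dom_nonzero_if_quadratic_in_pS
    [where c = "\<lambda>r \<theta> z. 2 * cos (2 * \<theta>) / r\<^sup>2 * z - sin (2 * \<theta>)"])
  show "F1 k \<in> borel_measurable borel"
    unfolding F1_def case_prod_unfold borel_prod[symmetric] by measurable
  show "\<exists>a b. \<forall>pS. F1 k (r, \<theta>, z, pR, pS)
      = a + b * pS + (2 * cos (2 * \<theta>) / r\<^sup>2 * z - sin (2 * \<theta>)) * pS\<^sup>2" for r \<theta> z pR
    by (intro exI[of _ "- 2 * pR\<^sup>2 * z * cos (2 * \<theta>) + k * r\<^sup>2 / sqrt (r ^ 4 + 16 * z\<^sup>2) * sin (2 * \<theta>)"]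
        exI[of _ "pR * r * cos (2 * \<theta>) + 4 * pR * z / r * sin (2 * \<theta>)"] allI)
      (simp add: F1_def algebra_simps)
  show "AE z in lborel. 2 * cos (2 * \<theta>) / r\<^sup>2 * z - sin (2 * \<theta>) \<noteq> 0" if "0 < r" for r \<theta> :: real
  proof -
    have "2 * cos (2 * \<theta>) / r\<^sup>2 \<noteq> 0 \<or> - sin (2 * \<theta>) \<noteq> 0"
      using that sin_zero_abs_cos_one[of "2 * \<theta>"] by auto
    from AE_affine_nonzero[OF this] show ?thesis by simp
  qed
qed

lemma AE_F2_nonzero: "AE x in lborel. in_dom x \<longrightarrow> F2 k x \<noteq> 0"
proof (rule AE_in_dom_nonzero_if_quadratic_in_pS
    [where c = "\<lambda>r \<theta> z. - 2 * sin (2 * \<theta>) / r\<^sup>2 * z - cos (2 * \<theta>)"])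
  show "F2 k \<in> borel_measurable borel"
    unfolding F2_def case_prod_unfold borel_prod[symmetric] by measurable
  show "\<exists>a b. \<forall>pS. F2 k (r, \<theta>, z, pR, pS)
      = a + b * pS + (- 2 * sin (2 * \<theta>) / r\<^sup>2 * z - cos (2 * \<theta>)) * pS\<^sup>2" for r \<theta> z pR
    by (intro exI[of _ "2 * pR\<^sup>2 * z * sin (2 * \<theta>) + k * r\<^sup>2 / sqrt (r ^ 4 + 16 * z\<^sup>2) * cos (2 * \<theta>)"]
        exI[of _ "- pR * r * sin (2 * \<theta>) + 4 * pR * z / r * cos (2 * \<theta>)"] allI)
      (simp add: F2_def algebra_simps)
  show "AE z in lborel. - 2 * sin (2 * \<theta>) / r\<^sup>2 * z - cos (2 * \<theta>) \<noteq> 0" if "0 < r" for r \<theta> :: real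
  proof -
    have "- 2 * sin (2 * \<theta>) / r\<^sup>2 \<noteq> 0 \<or> - cos (2 * \<theta>) \<noteq> 0"
      using that sin_zero_abs_cos_one[of "2 * \<theta>"] by auto
    from AE_affine_nonzero[OF this] show ?thesis by simp
  qed
qed

lemma AE_F3_nonzero: "AE x in lborel. in_dom x \<longrightarrow> F3 k x \<noteq> 0"
proof (rule AE_in_dom_nonzero_if_quadratic_in_pS[where c = "\<lambda>r \<theta> z. r\<^sup>2 + 4 * z\<^sup>2 / r\<^sup>2"])
  show "F3 k \<in> borel_measurable borel"
    unfolding F3_def case_prod_unfold borel_prod[symmetric] by measurable
  show "\<exists>a b. \<forall>pS. F3 k (r, \<theta>, z, pR, pS) = a + b * pS + (r\<^sup>2 + 4 * z\<^sup>2 / r\<^sup>2) * pS\<^sup>2"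
    for r \<theta> z pR
    by (intro exI[of _ "4 * z\<^sup>2 * pR\<^sup>2 + 8 * z\<^sup>2 * k / sqrt (r ^ 4 + 16 * z\<^sup>2)"]
        exI[of _ "- 4 * r * z * pR"] allI)
      (simp add: F3_def power2_eq_square algebra_simps add_divide_distrib)
  show "AE z in lborel. r\<^sup>2 + 4 * z\<^sup>2 / r\<^sup>2 \<noteq> 0" if "0 < r" for r \<theta> :: real
    using that by (intro AE_I2) (simp add: add_pos_nonneg less_imp_neq[symmetric])
qed

lemma AE_Fcos_nonzero: "AE x in lborel. in_dom x \<longrightarrow> Fcos x \<noteq> 0"
proof (rule AE_in_dom_nonzero_if_quadratic_in_pS[where c = "\<lambda>r \<theta> z. 2 / r\<^sup>2 * z"])
  show "Fcos \<in> borel_measurable borel"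
    unfolding Fcos_def case_prod_unfold borel_prod[symmetric] by measurable
  show "\<exists>a b. \<forall>pS. Fcos (r, \<theta>, z, pR, pS) = a + b * pS + 2 / r\<^sup>2 * z * pS\<^sup>2" for r \<theta> z pR
    by (intro exI[of _ "- 2 * pR\<^sup>2 * z"] exI[of _ "pR * r"] allI) (simp add: Fcos_def algebra_simps)
  show "AE z in lborel. 2 / r\<^sup>2 * z \<noteq> 0" if "0 < r" for r \<theta> :: real
    using AE_affine_nonzero[of "2 / r\<^sup>2" 0] that by simp
qed

theorem theorem2:
  fixes k :: real
  assumes "k > 0"
  shows "first_integral k (F1 k) \<and> first_integral k (F2 k) \<and> first_integral k (F3 k)
    \<and> func_indep_ae [Ham k, F1 k, F2 k]
    \<and> func_indep_ae [Ham k, F1 k, F3 k]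
    \<and> func_indep_ae [Ham k, F2 k, F3 k]
    \<and> func_indep_ae [F1 k, F2 k, F3 k]
    \<and> (\<forall>x. in_dom x \<longrightarrow> (F1 k x)\<^sup>2 + (F2 k x)\<^sup>2 = 2 * Ham k x * F3 k x + k\<^sup>2)"
proof -
  have ae: "AE x in lborel. in_dom x \<longrightarrow>
      Ham k x \<noteq> 0 \<and> F1 k x \<noteq> 0 \<and> F2 k x \<noteq> 0 \<and> F3 k x \<noteq> 0 \<and> Fcos x \<noteq> 0"
    using AE_Ham_nonzero AE_F1_nonzero AE_F2_nonzero AE_F3_nonzero AE_Fcos_nonzero
    by eventually_elim auto
  have "func_indep_ae [Ham k, F1 k, F2 k] \<and> func_indep_ae [Ham k, F1 k, F3 k]
      \<and> func_indep_ae [Ham k, F2 k, F3 k] \<and> func_indep_ae [F1 k, F2 k, F3 k]"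
    unfolding func_indep_ae_def using ae
    by (intro conjI; elim eventually_mono; blast dest: func_indep_at_triples)
  moreover have "first_integral k (F1 k)"
    using differentiable_at_in_dom(2) F1_derivative_along_hvf
    by (rule first_integral_if_derivative_along_hvf_zero)
  moreover have "first_integral k (F2 k)"
    using differentiable_at_in_dom(3) F2_derivative_along_hvf
    by (rule first_integral_if_derivative_along_hvf_zero)
  moreover have "first_integral k (F3 k)"
    using differentiable_at_in_dom(4) F3_derivative_along_hvf
    by (rule first_integral_if_derivative_along_hvf_zero)
  ultimately show ?thesis using F1_sq_plus_F2_sq_eq_Ham_F3 by blast
qed

end
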